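(* Let $A\subseteq\mathbb{N}$ and let $f\colon\deg_e(A)\to\mathcal{P}(\mathbb{N})$ be uniformly $e$-invariant and not constant. Then there is $B\in\deg_e(A)$ such that $f(A\oplus B)\neq f(A\oplus\varnothing)$ or $f(A\oplus B)\neq f(\varnothing\oplus B)$.
   Context: $X\oplus Y=\{2n:n\in X\}\cup\{2n+1:n\in Y\}$. Enumeration reducibility: for $A,B\subseteq\mathbb{N}$, $A\le_e B$ if $A=\Gamma(B):=\{n:\exists D\subseteq B,\ \langle n,D\rangle\in\Gamma\}$ for some c.e. set $\Gamma$ of pairs $\langle n,D\rangle$ with $D$ finite (canonical index); $(\Gamma_i)_{i\in\mathbb{N}}$ is the standard computable numbering of these enumeration operators. $A\equiv_e B$ iff $A\le_e B\le_e A$; $\deg_e(A)=\{B: B\equiv_e A\}$. Let $\mathcal{X}\subseteq\mathcal{P}(\mathbb{N})$ be closed under $\equiv_e$. A function $f\colon\mathcal{X}\to\mathcal{P}(\mathbb{N})$ is $e$-invariant if $A\equiv_e B$ implies $f(A)\equiv_e f(B)$. Write $A\equiv_e B$ via $\langle i,j\rangle$ if $\Gamma_i(A)=B$ and $\Gamma_j(B)=A$ (with $\langle\cdot,\cdot\rangle$ a fixed computable pairing bijection). A function $u\colon\mathbb{N}\to\mathbb{N}$ is a uniformity function for $f$ if for all $A,B\in\mathcal{X}$ and all $i,j$, whenever $A\equiv_e B$ via $\langle i,j\rangle$ then $f(A)\equiv_e f(B)$ via $u(\langle i,j\rangle)$. $f$ is uniformly $e$-invariant if it has some uniformity function. "Not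 constant" means there are $C,D\in\deg_e(A)$ with $f(C)\neq f(D)$. *)

theory Defs
  imports Main "HOL-Library.Nat_Bijection"
begin

datatype recf = Z | S | Proj nat | Comp recf "recf list" | Prim recf recf | Mu recf

text \<open>Arguments are lists of naturals; a missing argument is read as 0.\<close>

definition arg :: "nat list \<Rightarrow> nat \<Rightarrow> nat" where
  "arg xs i = (if i < length xs then xs ! i else 0)"

inductive eval :: "recf \<Rightarrow> nat list \<Rightarrow> nat \<Rightarrow> bool" where
  eval_Z: "eval Z xs 0"
| eval_S: "eval S xs (Suc (arg xs 0))"
| eval_Proj: "eval (Proj i) xs (arg xs i)"
| eval_Comp: "list_all2 (\<lambda>g y. eval g xs y) gs ys \<Longrightarrow> eval f ys z \<Longrightarrow> eval (Comp f gs) xs z"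
| eval_Prim0: "eval f xs z \<Longrightarrow> eval (Prim f g) (0 # xs) z"
| eval_PrimS: "eval (Prim f g) (n # xs) y \<Longrightarrow> eval g (n # y # xs) z \<Longrightarrow> eval (Prim f g) (Suc n # xs) z"
| eval_Mu: "eval f (n # xs) 0 \<Longrightarrow> (\<forall>m<n. \<exists>y. y > 0 \<and> eval f (m # xs) y) \<Longrightarrow> eval (Mu f) xs n"

fun enc :: "recf \<Rightarrow> nat" where
  "enc Z = prod_encode (0, 0)"
| "enc S = prod_encode (1, 0)"
| "enc (Proj i) = prod_encode (2, i)"
| "enc (Comp f gs) = prod_encode (3, prod_encode (enc f, list_encode (map enc gs)))"
| "enc (Prim f g) = prod_encode (4, prod_encode (enc f, enc g))"
| "enc (Mu f) = prod_encode (5, enc f)"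

text \<open>The standard numbering of c.e. sets: W i is the domain of the unary partial
  recursive function with code i (empty if i is not a code).\<close>

definition W :: "nat \<Rightarrow> nat set" where
  "W i = {x. \<exists>f y. enc f = i \<and> eval f [x] y}"

text \<open>Canonical index of finite sets: d codes the set {x. bit x of d is set}.\<close>

definition canon :: "nat \<Rightarrow> nat set" where
  "canon d = {x. odd (d div 2 ^ x)}"

text \<open>The i-th enumeration operator: the c.e. set W i regarded as a set of axioms
  \<langle>n, D\<rangle> = prod_encode (n, canonical index of D).\<close>

definition Gamma :: "nat \<Rightarrow> nat set \<Rightarrow> nat set" where
  "Gamma i X = {n. \<exists>d. prod_encode (n, d) \<in> W i \<and> canon d \<subseteq> X}"

definition e_le :: "nat set \<Rightarrow> nat set \<Rightarrow> bool" where
  "e_le A B \<longleftrightarrow> (\<exists>i. A = Gamma i B)"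

definition e_equiv :: "nat set \<Rightarrow> nat set \<Rightarrow> bool" where
  "e_equiv A B \<longleftrightarrow> e_le A B \<and> e_le B A"

definition deg_e :: "nat set \<Rightarrow> nat set set" where
  "deg_e A = {B. e_equiv B A}"

definition join :: "nat set \<Rightarrow> nat set \<Rightarrow> nat set" where
  "join X Y = {2 * n | n. n \<in> X} \<union> {2 * n + 1 | n. n \<in> Y}"

definition e_equiv_via :: "nat set \<Rightarrow> nat set \<Rightarrow> nat \<Rightarrow> bool" where
  "e_equiv_via A B k \<longleftrightarrow> Gamma (fst (prod_decode k)) A = B \<and> Gamma (snd (prod_decode k)) B = A"

definition uniformity_function :: "nat set set \<Rightarrow> (nat set \<Rightarrow> nat set) \<Rightarrow> (nat \<Rightarrow> nat) \<Rightarrow> bool" where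
  "uniformity_function \<X> f u \<longleftrightarrow>
     (\<forall>A\<in>\<X>. \<forall>B\<in>\<X>. \<forall>i j. e_equiv_via A B (prod_encode (i, j))
        \<longrightarrow> e_equiv_via (f A) (f B) (u (prod_encode (i, j))))"

definition uniformly_e_invariant :: "nat set set \<Rightarrow> (nat set \<Rightarrow> nat set) \<Rightarrow> bool" where
  "uniformly_e_invariant \<X> f \<longleftrightarrow> (\<exists>u. uniformity_function \<X> f u)"

end

theory Submission
  imports Defs
begin

text \<open>The operators with axioms \<open>\<langle>2n+1, {n}\<rangle>\<close> and \<open>\<langle>n, {2n+1}\<rangle>\<close> witness
  \<open>X \<equiv>\<^sub>e \<emptyset> \<oplus> X\<close> for every \<open>X\<close> at once, so uniformity yields a single \<open>j\<close> with
  \<open>f X = \<Gamma>\<^sub>j (f (\<emptyset> \<oplus> X))\<close> for all \<open>X \<in> deg\<^sub>e A\<close>. If the conclusion failed, then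
  \<open>f (\<emptyset> \<oplus> X) = f (A \<oplus> X) = f (A \<oplus> \<emptyset>)\<close> for all such \<open>X\<close>, and \<open>f\<close> would be
  constant on the degree. To see that \<open>\<emptyset> \<oplus> X\<close> stays in the degree, compose an
  arbitrary operator with these two: its axioms \<open>\<langle>q, D\<rangle>\<close> become \<open>\<langle>2q+1, D\<rangle>\<close>, or
  \<open>\<langle>q, D'\<rangle>\<close> for every \<open>D'\<close> with \<open>D = {n | 2n+1 \<in> D'}\<close>; both transformations are computable.\<close>

section \<open>Partial recursive programs\<close>

inductive_cases eval_ZE: "eval Z xs y"
inductive_cases eval_SE: "eval S xs y"
inductive_cases eval_ProjE: "eval (Proj i) xs y"
inductive_cases eval_CompE: "eval (Comp f gs) xs y"
inductive_cases eval_Prim0E: "eval (Prim f g) (0 # xs) y"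
inductive_cases eval_PrimSE: "eval (Prim f g) (Suc n # xs) y"
inductive_cases eval_MuE: "eval (Mu f) xs y"

lemma eval_deterministic: "eval p xs y \<Longrightarrow> eval p xs y' \<Longrightarrow> y = y'"
proof (induction arbitrary: y' rule: eval.induct)
  case (eval_Z xs) then show ?case by (rule eval_ZE) simp
next
  case (eval_S xs) then show ?case by (rule eval_SE) simp
next
  case (eval_Proj i xs) then show ?case by (rule eval_ProjE) simp
next
  case (eval_Comp xs gs ys f z)
  from eval_Comp.prems obtain ys' where ys': "list_all2 (\<lambda>g y. eval g xs y) gs ys'"
    and "eval f ys' y'"
    by (rule eval_CompE) simp
  have "ys = ys'" using eval_Comp.IH(1) ys'
  proof (induction gs arbitrary: ys ys')
    case (Cons g gs) then show ?case by (auto simp: list_all2_Cons1)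
  qed simp
  with eval_Comp.IH \<open>eval f ys' y'\<close> show ?case by simp
next
  case (eval_Prim0 f xs z g)
  from eval_Prim0.prems show ?case by (rule eval_Prim0E) (use eval_Prim0.IH in simp)
next
  case (eval_PrimS f g n xs y z)
  from eval_PrimS.prems show ?case by (rule eval_PrimSE) (use eval_PrimS.IH in fastforce)
next
  case (eval_Mu f n xs)
  from eval_Mu.prems have "eval f (y' # xs) 0" and below: "\<forall>m<y'. \<exists>y>0. eval f (m # xs) y"
    by (auto elim: eval_MuE)
  show ?case
  proof (rule linorder_cases)
    assume "n < y'"
    with below eval_Mu.IH(1) show ?thesis by fastforce
  next
    assume "y' < n"
    with eval_Mu.IH(2) \<open>eval f (y' # xs) 0\<close> show ?thesis by fastforce
  qed
qed

lemma inj_enc: "inj enc"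
proof
  show "enc f = enc g \<Longrightarrow> f = g" for f g
  proof (induction f arbitrary: g)
    case (Comp f gs)
    then obtain f' gs' where g: "g = Comp f' gs'" by (cases g) auto
    with Comp.prems have "enc f = enc f'" and map_eq: "map enc gs = map enc gs'"
      by (auto simp: list_encode_eq)
    moreover have "gs = gs'" using map_eq Comp.IH(2)
    proof (induction gs arbitrary: gs')
      case (Cons a gs) then show ?case by (cases gs') auto
    qed simp
    ultimately show ?case using Comp.IH(1) g by auto
  qed (case_tac g; auto)+
qed

definition computes :: "recf \<Rightarrow> (nat list \<Rightarrow> nat) \<Rightarrow> bool" where
  "computes p F \<longleftrightarrow> (\<forall>xs. eval p xs (F xs))"

lemma arg_simps [simp]:
  "arg (x # xs) 0 = x" "arg (x # xs) (Suc i) = arg xs i" "arg (x # xs) 1 = arg xs 0"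
  "arg (x # xs) 2 = arg xs 1" "arg [] i = 0"
  by (auto simp: arg_def numeral_2_eq_2)

lemma computes_eval_iff: "computes p F \<Longrightarrow> eval p xs y \<longleftrightarrow> y = F xs"
  unfolding computes_def using eval_deterministic by blast

lemma computes_cong: "computes p F \<Longrightarrow> (\<And>xs. F xs = H xs) \<Longrightarrow> computes p H"
  unfolding computes_def by metis

lemma computes_Z: "computes Z (\<lambda>_. 0)"
  by (simp add: computes_def eval.intros)

lemma computes_S: "computes S (\<lambda>xs. Suc (arg xs 0))"
  by (simp add: computes_def eval.intros)

lemma computes_Proj: "computes (Proj i) (\<lambda>xs. arg xs i)"
  by (simp add: computes_def eval.intros)

lemma computes_Comp1: "computes f F \<Longrightarrow> computes g G \<Longrightarrow> computes (Comp f [g]) (\<lambda>xs. F [G xs])"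
  unfolding computes_def by (auto intro: eval_Comp)

lemma computes_Comp2:
  "computes f F \<Longrightarrow> computes g G \<Longrightarrow> computes g' G' \<Longrightarrow>
    computes (Comp f [g, g']) (\<lambda>xs. F [G xs, G' xs])"
  unfolding computes_def by (metis eval_Comp list_all2_Cons list_all2_Nil)

lemma computes_one: "computes (Comp S [Z]) (\<lambda>_. 1)"
  by (rule computes_cong[OF computes_Comp1[OF computes_S computes_Z]]) simp

primrec prim_rec :: "(nat list \<Rightarrow> nat) \<Rightarrow> (nat list \<Rightarrow> nat) \<Rightarrow> nat \<Rightarrow> nat list \<Rightarrow> nat" where
  "prim_rec F G 0 xs = F xs"
| "prim_rec F G (Suc n) xs = G (n # prim_rec F G n xs # xs)"

lemma eval_Prim_prim_rec:
  "computes f F \<Longrightarrow> computes g G \<Longrightarrow> eval (Prim f g) (n # xs) (prim_rec F G n xs)"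
  by (induction n) (auto simp: computes_def intro: eval.intros)

lemma computes_Prim1:
  "computes f F \<Longrightarrow> computes g G \<Longrightarrow> computes g0 G0 \<Longrightarrow>
    computes (Comp (Prim f g) [g0]) (\<lambda>xs. prim_rec F G (G0 xs) [])"
  unfolding computes_def by (auto intro!: eval_Comp eval_Prim_prim_rec[unfolded computes_def])

lemma computes_Prim2:
  "computes f F \<Longrightarrow> computes g G \<Longrightarrow> computes g0 G0 \<Longrightarrow> computes g1 G1 \<Longrightarrow>
    computes (Comp (Prim f g) [g0, g1]) (\<lambda>xs. prim_rec F G (G0 xs) [G1 xs])"
  unfolding computes_def by (auto intro!: eval_Comp eval_Prim_prim_rec[unfolded computes_def])

lemma eval_Mu_iff:
  assumes "computes t T"
  shows "eval (Mu t) xs n \<longleftrightarrow> T (n # xs) = 0 \<and> (\<forall>m<n. T (m # xs) \<noteq> 0)"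
proof
  show "eval (Mu t) xs n \<Longrightarrow> T (n # xs) = 0 \<and> (\<forall>m<n. T (m # xs) \<noteq> 0)"
    by (erule eval_MuE) (use assms computes_eval_iff in fastforce)
  show "T (n # xs) = 0 \<and> (\<forall>m<n. T (m # xs) \<noteq> 0) \<Longrightarrow> eval (Mu t) xs n"
    using assms unfolding computes_def by (intro eval_Mu) (metis, metis neq0_conv)
qed

lemma ex_eval_Mu_iff:
  assumes "computes t T"
  shows "(\<exists>n. eval (Mu t) xs n) \<longleftrightarrow> (\<exists>n. T (n # xs) = 0)"
  unfolding eval_Mu_iff[OF assms] by (rule exists_least_iff[symmetric])

lemma computes_Mu:
  "computes t T \<Longrightarrow> (\<And>xs. T (F xs # xs) = 0 \<and> (\<forall>m<F xs. T (m # xs) \<noteq> 0)) \<Longrightarrow>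
    computes (Mu t) F"
  using eval_Mu_iff unfolding computes_def by blast

lemma eval_Comp_iff:
  "eval (Comp f gs) xs z \<longleftrightarrow> (\<exists>ys. list_all2 (\<lambda>g y. eval g xs y) gs ys \<and> eval f ys z)"
  by (blast elim: eval_CompE intro: eval_Comp)

lemma eval_Comp1_iff: "eval (Comp f [g]) xs z \<longleftrightarrow> (\<exists>y. eval g xs y \<and> eval f [y] z)"
  by (auto simp: eval_Comp_iff list_all2_Cons1)

lemma eval_Comp2_iff:
  "eval (Comp f [g, g']) xs z \<longleftrightarrow> (\<exists>y y'. eval g xs y \<and> eval g' xs y' \<and> eval f [y, y'] z)"
  by (auto simp: eval_Comp_iff list_all2_Cons1)

section \<open>Arithmetic programs\<close>

definition add_rf :: recf where
  "add_rf = Comp (Prim (Proj 0) (Comp S [Proj 1])) [Proj 0, Proj 1]"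

lemma computes_add_rf: "computes add_rf (\<lambda>xs. arg xs 0 + arg xs 1)"
proof -
  have "prim_rec (\<lambda>xs. arg xs 0) (\<lambda>xs. Suc (arg [arg xs 1] 0)) n [b] = n + b" for n b
    by (induction n) auto
  then show ?thesis unfolding add_rf_def
    by (intro computes_cong[OF computes_Prim2[OF computes_Proj
          computes_Comp1[OF computes_S computes_Proj] computes_Proj computes_Proj]]) simp
qed

definition pred_rf :: recf where
  "pred_rf = Comp (Prim Z (Proj 0)) [Proj 0]"

lemma computes_pred_rf: "computes pred_rf (\<lambda>xs. arg xs 0 - 1)"
proof -
  have "prim_rec (\<lambda>_. 0) (\<lambda>xs. arg xs 0) n [] = n - 1" for n
    by (induction n) auto
  then show ?thesis unfolding pred_rf_def
    by (intro computes_cong[OF computes_Prim1[OF computes_Z computes_Proj computes_Proj]]) simp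
qed

definition diff_rf :: recf where
  "diff_rf = Comp (Prim (Proj 0) (Comp pred_rf [Proj 1])) [Proj 1, Proj 0]"

lemma computes_diff_rf: "computes diff_rf (\<lambda>xs. arg xs 0 - arg xs 1)"
proof -
  have "prim_rec (\<lambda>xs. arg xs 0) (\<lambda>xs. arg [arg xs 1] 0 - 1) n [a] = a - n" for n a
    by (induction n) auto
  then show ?thesis unfolding diff_rf_def
    by (intro computes_cong[OF computes_Prim2[OF computes_Proj
          computes_Comp1[OF computes_pred_rf computes_Proj] computes_Proj computes_Proj]]) simp
qed

definition mult_rf :: recf where
  "mult_rf = Comp (Prim Z (Comp add_rf [Proj 1, Proj 2])) [Proj 0, Proj 1]"

lemma computes_mult_rf: "computes mult_rf (\<lambda>xs. arg xs 0 * arg xs 1)"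
proof -
  have "prim_rec (\<lambda>_. 0) (\<lambda>xs. arg [arg xs 1, arg xs 2] 0 + arg [arg xs 1, arg xs 2] 1) n [b] = n * b"
    for n b by (induction n) auto
  then show ?thesis unfolding mult_rf_def
    by (intro computes_cong[OF computes_Prim2[OF computes_Z
          computes_Comp2[OF computes_add_rf computes_Proj computes_Proj] computes_Proj computes_Proj]])
      simp
qed

definition dist_rf :: recf where
  "dist_rf = Comp add_rf [diff_rf, Comp diff_rf [Proj 1, Proj 0]]"

lemma computes_dist_rf: "computes dist_rf (\<lambda>xs. (arg xs 0 - arg xs 1) + (arg xs 1 - arg xs 0))"
  unfolding dist_rf_def
  by (intro computes_cong[OF computes_Comp2[OF computes_add_rf computes_diff_rf
        computes_Comp2[OF computes_diff_rf computes_Proj computes_Proj]]]) simp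

definition triangle_rf :: recf where
  "triangle_rf = Comp (Prim Z (Comp add_rf [Proj 1, Comp S [Proj 0]])) [Proj 0]"

lemma computes_triangle_rf: "computes triangle_rf (\<lambda>xs. triangle (arg xs 0))"
proof -
  have "prim_rec (\<lambda>_. 0)
      (\<lambda>xs. arg [arg xs 1, Suc (arg [arg xs 0] 0)] 0 + arg [arg xs 1, Suc (arg [arg xs 0] 0)] 1)
      n [] = triangle n" for n
    by (induction n) auto
  then show ?thesis unfolding triangle_rf_def
    by (intro computes_cong[OF computes_Prim1[OF computes_Z
          computes_Comp2[OF computes_add_rf computes_Proj computes_Comp1[OF computes_S computes_Proj]]
          computes_Proj]]) simp
qed

lemma triangle_mono: "a \<le> b \<Longrightarrow> triangle a \<le> triangle b"
  by (induction b) (auto simp: le_Suc_eq)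

definition prod_encode_rf :: recf where
  "prod_encode_rf = Comp add_rf [Comp triangle_rf [add_rf], Proj 0]"

lemma computes_prod_encode_rf: "computes prod_encode_rf (\<lambda>xs. prod_encode (arg xs 0, arg xs 1))"
  unfolding prod_encode_rf_def
  by (intro computes_cong[OF computes_Comp2[OF computes_add_rf
        computes_Comp1[OF computes_triangle_rf computes_add_rf] computes_Proj]])
    (simp add: prod_encode_def)

lemma prod_decode_eq_triangle:
  "z = triangle (fst (prod_decode z) + snd (prod_decode z)) + fst (prod_decode z)"
proof -
  obtain m n where mn: "prod_decode z = (m, n)" by fastforce
  then have "z = prod_encode (m, n)" by (metis prod_decode_inverse)
  with mn show ?thesis by (simp add: prod_encode_def)
qed

text \<open>The diagonal \<open>s = m + n\<close> of \<open>z = \<langle>m, n\<rangle>\<close> is the least \<open>s\<close> with \<open>z \<le> triangle s + s\<close>.\<close>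

definition prod_decode_sum_rf :: recf where
  "prod_decode_sum_rf = Mu (Comp diff_rf [Proj 1, Comp add_rf [Comp triangle_rf [Proj 0], Proj 0]])"

lemma computes_prod_decode_sum_rf:
  "computes prod_decode_sum_rf (\<lambda>xs. fst (prod_decode (arg xs 0)) + snd (prod_decode (arg xs 0)))"
proof -
  have c: "computes (Comp diff_rf [Proj 1, Comp add_rf [Comp triangle_rf [Proj 0], Proj 0]])
      (\<lambda>xs. arg xs 1 - (triangle (arg xs 0) + arg xs 0))"
    by (intro computes_cong[OF computes_Comp2[OF computes_diff_rf computes_Proj
          computes_Comp2[OF computes_add_rf computes_Comp1[OF computes_triangle_rf computes_Proj]
            computes_Proj]]]) simp
  have "z - (triangle s + s) \<noteq> 0" if "s < fst (prod_decode z) + snd (prod_decode z)" for z s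
  proof -
    have "triangle s + s < triangle (Suc s)" by simp
    also have "\<dots> \<le> triangle (fst (prod_decode z) + snd (prod_decode z))"
      using that by (intro triangle_mono) simp
    finally show ?thesis using prod_decode_eq_triangle[of z] by linarith
  qed
  moreover have "z - (triangle (fst (prod_decode z) + snd (prod_decode z))
      + (fst (prod_decode z) + snd (prod_decode z))) = 0" for z
    using prod_decode_eq_triangle[of z] by linarith
  ultimately show ?thesis unfolding prod_decode_sum_rf_def
    by (intro computes_Mu[OF c]) simp
qed

definition fst_decode_rf :: recf where
  "fst_decode_rf = Comp diff_rf [Proj 0, Comp triangle_rf [prod_decode_sum_rf]]"

lemma computes_fst_decode_rf: "computes fst_decode_rf (\<lambda>xs. fst (prod_decode (arg xs 0)))"
proof -
  have "z - triangle (fst (prod_decode z) + snd (prod_decode z)) = fst (prod_decode z)" for z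
    using prod_decode_eq_triangle[of z] by linarith
  then show ?thesis unfolding fst_decode_rf_def
    by (intro computes_cong[OF computes_Comp2[OF computes_diff_rf computes_Proj
          computes_Comp1[OF computes_triangle_rf computes_prod_decode_sum_rf]]]) simp
qed

definition snd_decode_rf :: recf where
  "snd_decode_rf = Comp diff_rf [prod_decode_sum_rf, fst_decode_rf]"

lemma computes_snd_decode_rf: "computes snd_decode_rf (\<lambda>xs. snd (prod_decode (arg xs 0)))"
  unfolding snd_decode_rf_def
  by (intro computes_cong[OF computes_Comp2[OF computes_diff_rf computes_prod_decode_sum_rf
        computes_fst_decode_rf]]) simp

definition parity_rf :: recf where
  "parity_rf = Comp (Prim Z (Comp diff_rf [Comp S [Z], Proj 1])) [Proj 0]"

lemma computes_parity_rf: "computes parity_rf (\<lambda>xs. arg xs 0 mod 2)"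
proof -
  have "prim_rec (\<lambda>_. 0) (\<lambda>xs. 1 - arg xs 1) n [] = n mod 2" for n
    by (induction n) (auto simp: mod_Suc)
  then show ?thesis unfolding parity_rf_def
    by (intro computes_cong[OF computes_Prim1[OF computes_Z
          computes_cong[OF computes_Comp2[OF computes_diff_rf computes_one computes_Proj]]
          computes_Proj]]) simp_all
qed

definition half_rf :: recf where
  "half_rf = Comp (Prim Z (Comp add_rf [Proj 1, Comp parity_rf [Proj 0]])) [Proj 0]"

lemma computes_half_rf: "computes half_rf (\<lambda>xs. arg xs 0 div 2)"
proof -
  have "prim_rec (\<lambda>_. 0) (\<lambda>xs. arg xs 1 + arg xs 0 mod 2) n [] = n div 2" for n
    by (induction n) (auto simp: div_Suc mod_Suc)
  then show ?thesis unfolding half_rf_def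
    by (intro computes_cong[OF computes_Prim1[OF computes_Z
          computes_cong[OF computes_Comp2[OF computes_add_rf computes_Proj
              computes_Comp1[OF computes_parity_rf computes_Proj]]]
          computes_Proj]]) simp_all
qed

definition pow2_rf :: recf where
  "pow2_rf = Comp (Prim (Comp S [Z]) (Comp add_rf [Proj 1, Proj 1])) [Proj 0]"

lemma computes_pow2_rf: "computes pow2_rf (\<lambda>xs. 2 ^ arg xs 0)"
proof -
  have "prim_rec (\<lambda>_. 1) (\<lambda>xs. arg xs 1 + arg xs 1) n [] = 2 ^ n" for n
    by (induction n) auto
  then show ?thesis unfolding pow2_rf_def
    by (intro computes_cong[OF computes_Prim1[OF computes_one
          computes_cong[OF computes_Comp2[OF computes_add_rf computes_Proj computes_Proj]]
          computes_Proj]]) simp_all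
qed

definition shiftr_rf :: recf where
  "shiftr_rf = Comp (Prim (Proj 0) (Comp half_rf [Proj 1])) [Proj 1, Proj 0]"

lemma computes_shiftr_rf: "computes shiftr_rf (\<lambda>xs. arg xs 0 div 2 ^ arg xs 1)"
proof -
  have "prim_rec (\<lambda>xs. arg xs 0) (\<lambda>xs. arg xs 1 div 2) n [d] = d div 2 ^ n" for n d
    by (induction n) (simp_all del: power_Suc add: power_Suc2 div_mult2_eq)
  then show ?thesis unfolding shiftr_rf_def
    by (intro computes_cong[OF computes_Prim2[OF computes_Proj
          computes_cong[OF computes_Comp1[OF computes_half_rf computes_Proj]]
          computes_Proj computes_Proj]]) simp_all
qed

definition odd_bits :: "nat \<Rightarrow> nat" where
  "odd_bits d = set_encode {m. 2 * m + 1 \<in> set_decode d}"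

lemma set_decode_odd_bits: "set_decode (odd_bits d) = {m. 2 * m + 1 \<in> set_decode d}"
proof -
  have "{m. 2 * m + 1 \<in> set_decode d} = (\<lambda>m. 2 * m + 1) -` set_decode d" by auto
  then have "finite {m. 2 * m + 1 \<in> set_decode d}"
    by (simp add: finite_vimageI inj_on_def)
  then show ?thesis unfolding odd_bits_def by simp
qed

lemma odd_bits_eq_sum: "odd_bits d = (\<Sum>i<d. (d div 2 ^ (2 * i + 1) mod 2) * 2 ^ i)"
proof -
  let ?F = "{m. 2 * m + 1 \<in> set_decode d}"
  have "m < d" if "m \<in> ?F" for m
  proof -
    have "odd (d div 2 ^ (2 * m + 1))" using that by (simp add: set_decode_def)
    then have "d div 2 ^ (2 * m + 1) \<noteq> 0" by (metis even_zero)
    then have "2 ^ (2 * m + 1) \<le> d" by (simp add: div_eq_0_iff not_less)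
    moreover have "m < 2 ^ m" by (rule less_exp)
    moreover have "(2::nat) ^ m \<le> 2 ^ (2 * m + 1)" by (intro power_increasing) auto
    ultimately show "m < d" by linarith
  qed
  then have "?F \<subseteq> {..<d}" by blast
  have "(\<Sum>i<d. (d div 2 ^ (2 * i + 1) mod 2) * 2 ^ i) = (\<Sum>i<d. if i \<in> ?F then 2 ^ i else 0)"
    by (intro sum.cong refl) (simp add: mod2_eq_if set_decode_def)
  also have "\<dots> = (\<Sum>i\<in>?F. 2 ^ i)"
    using sum.inter_restrict[of "{..<d}" "\<lambda>i. 2 ^ i :: nat" ?F] \<open>?F \<subseteq> {..<d}\<close>
    by (simp add: inf.absorb2)
  finally show ?thesis by (simp add: odd_bits_def set_encode_def)
qed

lemma odd_bits_set_encode_odd_image: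
  "odd_bits (set_encode ((\<lambda>m. 2 * m + 1) ` set_decode e)) = e"
proof -
  have "set_decode (odd_bits (set_encode ((\<lambda>m. 2 * m + 1) ` set_decode e))) = set_decode e"
    by (auto simp: set_decode_odd_bits)
  then show ?thesis by (metis set_decode_inverse)
qed

definition odd_bits_step_rf :: recf where
  "odd_bits_step_rf = Comp add_rf [Proj 1, Comp mult_rf
     [Comp parity_rf [Comp shiftr_rf [Proj 2, Comp S [Comp add_rf [Proj 0, Proj 0]]]],
      Comp pow2_rf [Proj 0]]]"

lemma computes_odd_bits_step_rf:
  "computes odd_bits_step_rf
     (\<lambda>xs. arg xs 1 + (arg xs 2 div 2 ^ (2 * arg xs 0 + 1) mod 2) * 2 ^ arg xs 0)"
  unfolding odd_bits_step_rf_def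
  by (intro computes_cong[OF computes_Comp2[OF computes_add_rf computes_Proj
        computes_Comp2[OF computes_mult_rf
          computes_Comp1[OF computes_parity_rf computes_Comp2[OF computes_shiftr_rf computes_Proj
            computes_Comp1[OF computes_S computes_Comp2[OF computes_add_rf computes_Proj computes_Proj]]]]
          computes_Comp1[OF computes_pow2_rf computes_Proj]]]])
    (simp add: mult_2)

definition odd_bits_rf :: recf where
  "odd_bits_rf = Comp (Prim Z odd_bits_step_rf) [Proj 0, Proj 0]"

lemma computes_odd_bits_rf: "computes odd_bits_rf (\<lambda>xs. odd_bits (arg xs 0))"
proof -
  have "prim_rec (\<lambda>_. 0) (\<lambda>xs. arg xs 1 + (arg xs 2 div 2 ^ (2 * arg xs 0 + 1) mod 2) * 2 ^ arg xs 0)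
      n [d] = (\<Sum>i<n. (d div 2 ^ (2 * i + 1) mod 2) * 2 ^ i)" for n d
    by (induction n) auto
  then show ?thesis unfolding odd_bits_rf_def odd_bits_eq_sum
    by (intro computes_cong[OF computes_Prim2[OF computes_Z computes_odd_bits_step_rf
          computes_Proj computes_Proj]]) simp_all
qed

section \<open>Enumeration operators between \<open>X\<close> and \<open>\<emptyset> \<oplus> X\<close>\<close>

definition dom_rf :: "recf \<Rightarrow> nat set" where
  "dom_rf P = {x. \<exists>y. eval P [x] y}"

lemma W_enc: "W (enc P) = dom_rf P"
  unfolding W_def dom_rf_def using inj_enc by (auto dest: injD)

lemma W_eq_dom_rf: "\<exists>P. W k = dom_rf P"
proof (cases "k \<in> range enc")
  case True
  then show ?thesis using W_enc by blast
next
  case False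
  have "dom_rf (Mu S) = {}" unfolding dom_rf_def by (auto elim!: eval_MuE eval_SE)
  with False show ?thesis unfolding W_def by auto
qed

lemma canon_eq_set_decode: "canon = set_decode"
  by (simp add: fun_eq_iff canon_def set_decode_def)

lemma set_decode_power_2: "set_decode (2 ^ n) = {n}"
  using set_decode_plus_power_2[of n 0] by simp

lemma dom_rf_Mu_dist_rf:
  assumes "computes g (\<lambda>xs. h (arg xs 0))"
  shows "dom_rf (Mu (Comp dist_rf [Proj 1, g])) = range h"
proof -
  have "computes (Comp dist_rf [Proj 1, g])
      (\<lambda>xs. (arg xs 1 - h (arg xs 0)) + (h (arg xs 0) - arg xs 1))"
    by (intro computes_cong[OF computes_Comp2[OF computes_dist_rf computes_Proj assms]]) simp
  from ex_eval_Mu_iff[OF this] show ?thesis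
    unfolding dom_rf_def by auto
qed

lemma Gamma_eq_if_W_singletons:
  assumes "W i = range (\<lambda>n. prod_encode (g n, 2 ^ h n))"
  shows "Gamma i X = {g n | n. h n \<in> X}"
proof -
  have "prod_encode (m, d) \<in> W i \<and> canon d \<subseteq> X \<longleftrightarrow> (\<exists>n. m = g n \<and> d = 2 ^ h n \<and> h n \<in> X)"
    for m d
    by (auto simp: assms canon_eq_set_decode set_decode_power_2 prod_encode_eq)
  then show ?thesis unfolding Gamma_def by blast
qed

lemma odd_in_join_iff: "2 * n + 1 \<in> join X Y \<longleftrightarrow> n \<in> Y"
  unfolding join_def by auto presburger

definition into_odd_rf :: recf where
  "into_odd_rf = Mu (Comp dist_rf [Proj 1, Comp prod_encode_rf
     [Comp S [Comp add_rf [Proj 0, Proj 0]], Comp pow2_rf [Proj 0]]])"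

definition from_odd_rf :: recf where
  "from_odd_rf = Mu (Comp dist_rf [Proj 1, Comp prod_encode_rf
     [Proj 0, Comp pow2_rf [Comp S [Comp add_rf [Proj 0, Proj 0]]]]])"

lemma W_into_odd_rf: "W (enc into_odd_rf) = range (\<lambda>n. prod_encode (2 * n + 1, 2 ^ n))"
  unfolding W_enc into_odd_rf_def
  by (intro dom_rf_Mu_dist_rf computes_cong[OF computes_Comp2[OF computes_prod_encode_rf
        computes_Comp1[OF computes_S computes_Comp2[OF computes_add_rf computes_Proj computes_Proj]]
        computes_Comp1[OF computes_pow2_rf computes_Proj]]]) (simp add: mult_2)

lemma W_from_odd_rf: "W (enc from_odd_rf) = range (\<lambda>n. prod_encode (n, 2 ^ (2 * n + 1)))"
  unfolding W_enc from_odd_rf_def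
  by (intro dom_rf_Mu_dist_rf computes_cong[OF computes_Comp2[OF computes_prod_encode_rf computes_Proj
        computes_Comp1[OF computes_pow2_rf
          computes_Comp1[OF computes_S computes_Comp2[OF computes_add_rf computes_Proj computes_Proj]]]]])
    (simp add: mult_2)

lemma e_equiv_via_join_empty:
  "e_equiv_via X (join {} X) (prod_encode (enc into_odd_rf, enc from_odd_rf))"
proof -
  have "Gamma (enc into_odd_rf) X = join {} X"
    by (simp add: Gamma_eq_if_W_singletons[OF W_into_odd_rf] join_def)
  moreover have "Gamma (enc from_odd_rf) (join {} X) = X"
    by (simp only: Gamma_eq_if_W_singletons[OF W_from_odd_rf] odd_in_join_iff) simp
  ultimately show ?thesis unfolding e_equiv_via_def by simp
qed

definition odd_index_rf :: recf where
  "odd_index_rf = Mu (Comp dist_rf [Comp fst_decode_rf [Proj 1], Comp S [Comp add_rf [Proj 0, Proj 0]]])"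

lemma eval_odd_index_rf: "eval odd_index_rf [x] q \<longleftrightarrow> fst (prod_decode x) = 2 * q + 1"
proof -
  have "computes (Comp dist_rf [Comp fst_decode_rf [Proj 1], Comp S [Comp add_rf [Proj 0, Proj 0]]])
      (\<lambda>xs. (fst (prod_decode (arg xs 1)) - (2 * arg xs 0 + 1))
        + ((2 * arg xs 0 + 1) - fst (prod_decode (arg xs 1))))"
    by (intro computes_cong[OF computes_Comp2[OF computes_dist_rf
          computes_Comp1[OF computes_fst_decode_rf computes_Proj]
          computes_Comp1[OF computes_S computes_Comp2[OF computes_add_rf computes_Proj computes_Proj]]]])
      (simp add: mult_2)
  from eval_Mu_iff[OF this] show ?thesis
    unfolding odd_index_rf_def by auto
qed

lemma e_le_join_empty_left:
  assumes "e_le C A"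
  shows "e_le (join {} C) A"
proof -
  obtain k where C: "C = Gamma k A" using assms unfolding e_le_def by blast
  obtain P where P: "W k = dom_rf P" using W_eq_dom_rf by blast
  define I where "I = Comp P [Comp prod_encode_rf [odd_index_rf, snd_decode_rf]]"
  have dom_I: "prod_encode (n, d) \<in> dom_rf I \<longleftrightarrow> (\<exists>q. n = 2 * q + 1 \<and> prod_encode (q, d) \<in> W k)"
    for n d
    unfolding I_def dom_rf_def P
    by (auto simp: eval_Comp1_iff eval_Comp2_iff eval_odd_index_rf
        computes_eval_iff[OF computes_snd_decode_rf] computes_eval_iff[OF computes_prod_encode_rf])
      blast
  have "Gamma (enc I) A = join {} C"
    unfolding Gamma_def W_enc C join_def by (auto simp: dom_I)
  then show ?thesis unfolding e_le_def by metis
qed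

lemma ex_odd_bits_subset_join_empty_iff:
  "(\<exists>d. Q (odd_bits d) \<and> set_decode d \<subseteq> join {} C) \<longleftrightarrow> (\<exists>e. Q e \<and> set_decode e \<subseteq> C)"
proof
  assume "\<exists>d. Q (odd_bits d) \<and> set_decode d \<subseteq> join {} C"
  then obtain d where "Q (odd_bits d)" and d: "set_decode d \<subseteq> join {} C" by blast
  moreover have "set_decode (odd_bits d) \<subseteq> C"
    unfolding set_decode_odd_bits using d odd_in_join_iff by blast
  ultimately show "\<exists>e. Q e \<and> set_decode e \<subseteq> C" by blast
next
  assume "\<exists>e. Q e \<and> set_decode e \<subseteq> C"
  then obtain e where "Q e" "set_decode e \<subseteq> C" by blast
  define d where "d = set_encode ((\<lambda>m. 2 * m + 1) ` set_decode e)"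
  have "odd_bits d = e" unfolding d_def by (rule odd_bits_set_encode_odd_image)
  moreover have "set_decode d \<subseteq> join {} C"
    using \<open>set_decode e \<subseteq> C\<close> unfolding d_def join_def by auto
  ultimately show "\<exists>d. Q (odd_bits d) \<and> set_decode d \<subseteq> join {} C" using \<open>Q e\<close> by blast
qed

lemma e_le_join_empty_right:
  assumes "e_le A C"
  shows "e_le A (join {} C)"
proof -
  obtain l where A: "A = Gamma l C" using assms unfolding e_le_def by blast
  obtain P where P: "W l = dom_rf P" using W_eq_dom_rf by blast
  define J where "J = Comp P [Comp prod_encode_rf [fst_decode_rf, Comp odd_bits_rf [snd_decode_rf]]]"
  have dom_J: "prod_encode (n, d) \<in> dom_rf J \<longleftrightarrow> prod_encode (n, odd_bits d) \<in> W l" for n d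
    unfolding J_def dom_rf_def P
    by (auto simp: eval_Comp1_iff eval_Comp2_iff computes_eval_iff[OF computes_fst_decode_rf]
        computes_eval_iff[OF computes_snd_decode_rf] computes_eval_iff[OF computes_prod_encode_rf]
        computes_eval_iff[OF computes_odd_bits_rf])
  have "Gamma (enc J) (join {} C) = A"
    unfolding Gamma_def W_enc dom_J A canon_eq_set_decode
    by (rule Collect_cong) (rule ex_odd_bits_subset_join_empty_iff)
  then show ?thesis unfolding e_le_def by metis
qed

lemma join_empty_in_deg_e: "C \<in> deg_e A \<Longrightarrow> join {} C \<in> deg_e A"
  unfolding deg_e_def e_equiv_def
  by (blast intro: e_le_join_empty_left e_le_join_empty_right)

lemma uniformity_function_Gamma:
  assumes "uniformity_function \<X> f u" and "C \<in> \<X>" and "D \<in> \<X>"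
    and "e_equiv_via C D (prod_encode (i, j))"
  shows "f C = Gamma (snd (prod_decode (u (prod_encode (i, j))))) (f D)"
  using assms unfolding uniformity_function_def e_equiv_via_def by blast

theorem lemma5p3:
  fixes A :: "nat set" and f :: "nat set \<Rightarrow> nat set"
  assumes "uniformly_e_invariant (deg_e A) f"
    and "\<exists>C\<in>deg_e A. \<exists>D\<in>deg_e A. f C \<noteq> f D"
  shows "\<exists>B\<in>deg_e A. f (join A B) \<noteq> f (join A {}) \<or> f (join A B) \<noteq> f (join {} B)"
proof (rule ccontr)
  assume "\<not> ?thesis"
  then have collapse: "f (join {} X) = f (join A {})" if "X \<in> deg_e A" for X
    using that by auto
  obtain u where u: "uniformity_function (deg_e A) f u"
    using assms(1) unfolding uniformly_e_invariant_def by blast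
  define j where "j = snd (prod_decode (u (prod_encode (enc into_odd_rf, enc from_odd_rf))))"
  have "f X = Gamma j (f (join A {}))" if "X \<in> deg_e A" for X
    using uniformity_function_Gamma[OF u that join_empty_in_deg_e[OF that] e_equiv_via_join_empty]
      collapse[OF that] unfolding j_def by simp
  with assms(2) show False by auto
qed

end
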